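(* For $n \ge 4$ with $n \equiv 4 \pmod 6$, if $G \cong P_n$ and $v$ is an arbitrary vertex of $G$, then $\gamma_{\rm tg}(G|v) \le \gamma_{\rm tg}(G) - 1$.
   Context: Total domination game on a graph without isolated vertices: Dominator and Staller alternately choose vertices, each chosen vertex must be adjacent to some vertex not yet totally dominated; the game ends when no legal move exists; Dominator minimizes, Staller maximizes the number of moves; $\gamma_{\rm tg}(G)$ is the number of moves in the Dominator-start game under optimal play. $G|v$ is $G$ with $v$ declared already totally dominated, and $\gamma_{\rm tg}(G|v)$ is the corresponding optimal number of moves in the Dominator-start game. *)

theory Defs
  imports Main
begin

text \<open>Graphs: a vertex set V together with an adjacency relation E (only its
restriction to V matters).  The open neighbourhood of x in V:\<close>

definition nbhd :: "('a \<Rightarrow> 'a \<Rightarrow> bool) \<Rightarrow> 'a set \<Rightarrow> 'a \<Rightarrow> 'a set" where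
  "nbhd E V x = {y \<in> V. E x y}"

definition legal_moves :: "('a \<Rightarrow> 'a \<Rightarrow> bool) \<Rightarrow> 'a set \<Rightarrow> 'a set \<Rightarrow> 'a set" where
  "legal_moves E V D = {x \<in> V. \<not> nbhd E V x \<subseteq> D}"

text \<open>Optimal number of remaining moves of the total domination game, where
D is the set of already totally dominated vertices and the flag says whether
Dominator (True) or Staller (False) is to move.  Dominator minimises, Staller
maximises.  (The value 0 for infinite V is a dummy.)\<close>

function tg_val :: "('a \<Rightarrow> 'a \<Rightarrow> bool) \<Rightarrow> 'a set \<Rightarrow> bool \<Rightarrow> 'a set \<Rightarrow> nat" where
  "tg_val E V dmove D =
    (if finite V \<and> legal_moves E V D \<noteq> {} then
       (if dmove
        then Min ((\<lambda>x. Suc (tg_val E V False (D \<union> nbhd E V x))) ` legal_moves E V D)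
        else Max ((\<lambda>x. Suc (tg_val E V True (D \<union> nbhd E V x))) ` legal_moves E V D))
     else 0)"
  by pat_completeness auto
termination
proof (relation "measure (\<lambda>(E, V, b, D). card (V - D))")
  show "wf (measure (\<lambda>(E, V, b, D). card (V - D)))" by simp
next
  fix E :: "'a \<Rightarrow> 'a \<Rightarrow> bool" and V D x and b :: bool
  assume "finite V \<and> legal_moves E V D \<noteq> {}" and "x \<in> legal_moves E V D"
  then have fin: "finite V" and nx: "\<not> nbhd E V x \<subseteq> D" by (auto simp: legal_moves_def)
  then obtain y where y: "y \<in> nbhd E V x" "y \<notin> D" by auto
  have yV: "y \<in> V" using y by (simp add: nbhd_def)
  have "V - (D \<union> nbhd E V x) \<subset> V - D" using y yV by auto
  then have "card (V - (D \<union> nbhd E V x)) < card (V - D)"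
    using fin by (intro psubset_card_mono) auto
  then show "((E, V, False, D \<union> nbhd E V x), E, V, b, D) \<in> measure (\<lambda>(E, V, b, D). card (V - D))"
   and "((E, V, True, D \<union> nbhd E V x), E, V, b, D) \<in> measure (\<lambda>(E, V, b, D). card (V - D))"
    by simp_all
qed

definition gamma_tg :: "('a \<Rightarrow> 'a \<Rightarrow> bool) \<Rightarrow> 'a set \<Rightarrow> nat" where
  "gamma_tg E V = tg_val E V True {}"

definition gamma_tg_pre :: "('a \<Rightarrow> 'a \<Rightarrow> bool) \<Rightarrow> 'a set \<Rightarrow> 'a \<Rightarrow> nat" where
  "gamma_tg_pre E V v = tg_val E V True {v}"

definition iso_path :: "('a \<Rightarrow> 'a \<Rightarrow> bool) \<Rightarrow> 'a set \<Rightarrow> nat \<Rightarrow> bool" where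
  "iso_path E V n \<longleftrightarrow> (\<exists>f. bij_betw f {..<n} V \<and>
     (\<forall>i<n. \<forall>j<n. E (f i) (f j) \<longleftrightarrow> (i + 1 = j \<or> j + 1 = i)))"

end

(*
  On the path with vertices 0, ..., 2m - 1 a move at x totally dominates exactly x - 1 and x + 1.
  Listing the even and the odd vertices separately (with padding), the undominated vertices form a
  Boolean list in which every move clears two adjacent entries; the game becomes a game on the
  maximal blocks of True entries.

  Lower bound: a move clears at most two entries, and Staller can always clear exactly one (at the
  border of a block), so u undominated vertices force at least (2u + 1) div 3 moves.  For the
  empty start u = 2m = 6k + 4, giving 4k + 3 moves.

  Upper bound: weigh a block of length l by 4l + 2, 4l + 1 or 4l according as l = 1, 2 or 0
  (mod 3), let W be the total weight and p the parity of the number of blocks of length 2 (mod 3).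
  Every move lowers W by at least 6 - 3 (p + p'), p' being the parity afterwards, and Dominator can
  always lower it by 6 + 3 (p + p'), by shortening a block of length 2 (mod 3) if p is odd.  Hence
  Dominator keeps the game within (W - 3p) div 6 moves.  If v is declared dominated, the blocks
  have lengths j, j' and m with j + j' = m - 1, so W - 3p = 24k + 12 and the game ends within
  4k + 2 moves.
*)

theory Submission
  imports Defs
begin

section \<open>Potential bounds for the game value\<close>

declare tg_val.simps [simp del]

lemma finite_legal_moves: "finite V \<Longrightarrow> finite (legal_moves E V D)"
  by (simp add: legal_moves_def)

lemma tg_val_no_moves: "legal_moves E V D = {} \<Longrightarrow> tg_val E V b D = 0"
  by (simp add: tg_val.simps)

lemma tg_val_Dominator:
  "finite V \<Longrightarrow> legal_moves E V D \<noteq> {} \<Longrightarrow>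
   tg_val E V True D = Min ((\<lambda>x. Suc (tg_val E V False (D \<union> nbhd E V x))) ` legal_moves E V D)"
  by (simp add: tg_val.simps)

lemma tg_val_Staller:
  "finite V \<Longrightarrow> legal_moves E V D \<noteq> {} \<Longrightarrow>
   tg_val E V False D = Max ((\<lambda>x. Suc (tg_val E V True (D \<union> nbhd E V x))) ` legal_moves E V D)"
  by (simp add: tg_val.simps)

lemma card_undominated_decreases:
  assumes "finite V" and "x \<in> legal_moves E V D"
  shows "card (V - (D \<union> nbhd E V x)) < card (V - D)"
proof (rule psubset_card_mono)
  obtain y where "y \<in> nbhd E V x" "y \<notin> D"
    using assms(2) by (auto simp: legal_moves_def)
  then show "V - (D \<union> nbhd E V x) \<subset> V - D"
    by (auto simp: nbhd_def)
qed (use assms(1) in simp)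

lemma tg_val_le_potential:
  fixes uD uS :: "'a set \<Rightarrow> nat"
  assumes "finite V"
    and dominator: "\<And>D. legal_moves E V D \<noteq> {} \<Longrightarrow>
      \<exists>x\<in>legal_moves E V D. Suc (uS (D \<union> nbhd E V x)) \<le> uD D"
    and staller: "\<And>D x. x \<in> legal_moves E V D \<Longrightarrow> Suc (uD (D \<union> nbhd E V x)) \<le> uS D"
  shows "tg_val E V True D \<le> uD D \<and> tg_val E V False D \<le> uS D"
proof (induction "card (V - D)" arbitrary: D rule: less_induct)
  case less
  show ?case
  proof (cases "legal_moves E V D = {}")
    case False
    have IH: "tg_val E V b (D \<union> nbhd E V x) \<le> (if b then uD else uS) (D \<union> nbhd E V x)"
      if "x \<in> legal_moves E V D" for x b
      using less card_undominated_decreases[OF \<open>finite V\<close> that] by auto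
    obtain x where x: "x \<in> legal_moves E V D" "Suc (uS (D \<union> nbhd E V x)) \<le> uD D"
      using dominator[OF False] by blast
    have "tg_val E V True D \<le> Suc (tg_val E V False (D \<union> nbhd E V x))"
      using x(1) by (simp add: tg_val_Dominator[OF \<open>finite V\<close> False] finite_legal_moves[OF \<open>finite V\<close>])
    also have "\<dots> \<le> uD D"
      using IH[OF x(1), of False] x(2) by simp
    finally have "tg_val E V True D \<le> uD D" .
    moreover have "tg_val E V False D \<le> uS D"
    proof -
      have "Suc (tg_val E V True (D \<union> nbhd E V y)) \<le> uS D" if "y \<in> legal_moves E V D" for y
        using IH[OF that, of True] staller[OF that] by simp
      then show ?thesis
        by (simp add: tg_val_Staller[OF \<open>finite V\<close> False] finite_legal_moves[OF \<open>finite V\<close>] False)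
    qed
    ultimately show ?thesis ..
  qed (simp add: tg_val_no_moves)
qed

lemma tg_val_ge_potential:
  fixes lD lS :: "'a set \<Rightarrow> nat"
  assumes "finite V"
    and dominator: "\<And>D x. x \<in> legal_moves E V D \<Longrightarrow> lD D \<le> Suc (lS (D \<union> nbhd E V x))"
    and staller: "\<And>D. legal_moves E V D \<noteq> {} \<Longrightarrow>
      \<exists>x\<in>legal_moves E V D. lS D \<le> Suc (lD (D \<union> nbhd E V x))"
    and terminal: "\<And>D. legal_moves E V D = {} \<Longrightarrow> lD D = 0 \<and> lS D = 0"
  shows "lD D \<le> tg_val E V True D \<and> lS D \<le> tg_val E V False D"
proof (induction "card (V - D)" arbitrary: D rule: less_induct)
  case less
  show ?case
  proof (cases "legal_moves E V D = {}")
    case False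
    have IH: "(if b then lD else lS) (D \<union> nbhd E V x) \<le> tg_val E V b (D \<union> nbhd E V x)"
      if "x \<in> legal_moves E V D" for x b
      using less card_undominated_decreases[OF \<open>finite V\<close> that] by auto
    obtain x where x: "x \<in> legal_moves E V D" "lS D \<le> Suc (lD (D \<union> nbhd E V x))"
      using staller[OF False] by blast
    have "lS D \<le> Suc (tg_val E V True (D \<union> nbhd E V x))"
      using IH[OF x(1), of True] x(2) by simp
    also have "\<dots> \<le> tg_val E V False D"
      using x(1) by (simp add: tg_val_Staller[OF \<open>finite V\<close> False] finite_legal_moves[OF \<open>finite V\<close>])
    finally have "lS D \<le> tg_val E V False D" .
    moreover have "lD D \<le> tg_val E V True D"
    proof -
      have "lD D \<le> Suc (tg_val E V False (D \<union> nbhd E V y))" if "y \<in> legal_moves E V D" for y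
        using IH[OF that, of False] dominator[OF that] by simp
      then show ?thesis
        by (simp add: tg_val_Dominator[OF \<open>finite V\<close> False] finite_legal_moves[OF \<open>finite V\<close>] False)
    qed
    ultimately show ?thesis by simp
  qed (simp add: tg_val_no_moves terminal)
qed

section \<open>Invariance under graph isomorphism\<close>

context
  fixes f :: "'b \<Rightarrow> 'a" and E :: "'a \<Rightarrow> 'a \<Rightarrow> bool" and E' :: "'b \<Rightarrow> 'b \<Rightarrow> bool"
    and V :: "'a set" and V' :: "'b set"
  assumes bij: "bij_betw f V' V"
    and adj: "\<And>x y. x \<in> V' \<Longrightarrow> y \<in> V' \<Longrightarrow> E (f x) (f y) \<longleftrightarrow> E' x y"
begin

lemma nbhd_iso: "x \<in> V' \<Longrightarrow> nbhd E V (f x) = f ` nbhd E' V' x"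
  using bij adj by (auto simp: nbhd_def bij_betw_def)

lemma legal_moves_iso:
  assumes "D \<subseteq> V'"
  shows "legal_moves E V (f ` D) = f ` legal_moves E' V' D"
proof -
  have inj: "inj_on f V'" and img: "f ` V' = V"
    using bij by (auto simp: bij_betw_def)
  have dominated: "nbhd E V (f x) \<subseteq> f ` D \<longleftrightarrow> nbhd E' V' x \<subseteq> D" if "x \<in> V'" for x
  proof -
    have "nbhd E' V' x \<subseteq> V'"
      by (simp add: nbhd_def)
    then show ?thesis
      using nbhd_iso[OF that] assms inj_on_image_mem_iff[OF inj] by (auto simp: subset_iff) (metis image_eqI subsetD)
  qed
  have "legal_moves E V (f ` D) = f ` {x \<in> V'. \<not> nbhd E V (f x) \<subseteq> f ` D}"
    unfolding legal_moves_def img[symmetric] by auto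
  also have "\<dots> = f ` legal_moves E' V' D"
    using dominated unfolding legal_moves_def by (metis (no_types, lifting) mem_Collect_eq)
  finally show ?thesis .
qed

lemma tg_val_iso:
  assumes "finite V'" and "D \<subseteq> V'"
  shows "tg_val E V b (f ` D) = tg_val E' V' b D"
  using assms(2)
proof (induction "card (V' - D)" arbitrary: D b rule: less_induct)
  case less
  have "finite V"
    using bij assms(1) bij_betw_finite by blast
  have move: "f ` D \<union> nbhd E V (f x) = f ` (D \<union> nbhd E' V' x)"
    and IH: "tg_val E V c (f ` (D \<union> nbhd E' V' x)) = tg_val E' V' c (D \<union> nbhd E' V' x)"
    if "x \<in> legal_moves E' V' D" for x c
  proof -
    have "x \<in> V'"
      using that by (simp add: legal_moves_def)
    then show "f ` D \<union> nbhd E V (f x) = f ` (D \<union> nbhd E' V' x)"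
      by (simp add: nbhd_iso image_Un)
    show "tg_val E V c (f ` (D \<union> nbhd E' V' x)) = tg_val E' V' c (D \<union> nbhd E' V' x)"
      using less card_undominated_decreases[OF assms(1) that] by (auto simp: nbhd_def)
  qed
  have succ: "(\<lambda>y. Suc (tg_val E V c (f ` D \<union> nbhd E V y))) ` legal_moves E V (f ` D)
      = (\<lambda>x. Suc (tg_val E' V' c (D \<union> nbhd E' V' x))) ` legal_moves E' V' D" for c
    unfolding legal_moves_iso[OF less.prems] image_image by (rule image_cong) (simp_all add: move IH)
  show ?case
  proof (cases "legal_moves E' V' D = {}")
    case True
    then show ?thesis
      using legal_moves_iso[OF less.prems] by (simp add: tg_val_no_moves)
  next
    case False
    then have "legal_moves E V (f ` D) \<noteq> {}"
      using legal_moves_iso[OF less.prems] by simp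
    then show ?thesis
      using succ False \<open>finite V\<close> assms(1)
      by (cases b) (simp_all add: tg_val_Dominator tg_val_Staller)
  qed
qed

end

section \<open>Boolean lists and their blocks\<close>

lemma exists_True_False_step:
  assumes "P i" and "\<not> P j" and "i < j"
  shows "\<exists>k. i \<le> k \<and> k < j \<and> P k \<and> \<not> P (Suc k)"
  using assms(2,3)
proof (induction j)
  case (Suc j)
  show ?case
  proof (cases "P j")
    case True
    then show ?thesis
      using Suc.prems by (intro exI[of _ j]) auto
  next
    case False
    then have "i < j"
      using assms(1) Suc.prems(2) less_Suc_eq by blast
    then show ?thesis
      using Suc.IH[OF False] by (meson less_SucI)
  qed
qed simp

lemma clear_pair_decomp:
  assumes "Suc k < length bs"
  shows "bs = take k bs @ [bs ! k, bs ! Suc k] @ drop (Suc (Suc k)) bs"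
    and "bs[k := False, Suc k := False] = take k bs @ [False, False] @ drop (Suc (Suc k)) bs"
proof -
  have "drop k bs = bs ! k # bs ! Suc k # drop (Suc (Suc k)) bs"
    using assms by (simp add: Cons_nth_drop_Suc)
  then show "bs = take k bs @ [bs ! k, bs ! Suc k] @ drop (Suc (Suc k)) bs"
    by (metis append_Cons append_Nil append_take_drop_id)
  show "bs[k := False, Suc k := False] = take k bs @ [False, False] @ drop (Suc (Suc k)) bs"
    using assms by (simp add: upd_conv_take_nth_drop take_Suc_conv_app_nth min_def)
qed

lemma count_clear_pair:
  assumes "Suc k < length bs"
  shows "count_list bs True = count_list (bs[k := False, Suc k := False]) True + of_bool (bs ! k) + of_bool (bs ! Suc k)"
  using arg_cong[OF clear_pair_decomp(1)[OF assms], of "\<lambda>bs. count_list bs True"]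
    clear_pair_decomp(2)[OF assms] by simp

lemma count_list_replicate_same: "count_list (replicate n x) x = n"
  by (induction n) auto

lemma map_neq_upt: "j < m \<Longrightarrow> map (\<lambda>i. i \<noteq> j) [0..<m] = replicate j True @ False # replicate (m - Suc j) True"
  by (rule nth_equalityI) (auto simp: nth_append nth_Cons')

text \<open>\<open>run_sum g c bs\<close> sums \<open>g\<close> over the lengths of the maximal blocks of \<open>True\<close> in
  \<open>replicate c True @ bs\<close>; if \<open>g 0 = 0\<close>, the empty blocks between consecutive \<open>False\<close> entries
  contribute nothing.\<close>

fun run_sum :: "(nat \<Rightarrow> nat) \<Rightarrow> nat \<Rightarrow> bool list \<Rightarrow> nat" where
  "run_sum g c [] = g c"
| "run_sum g c (b # bs) = (if b then run_sum g (Suc c) bs else g c + run_sum g 0 bs)"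

fun trailing_run :: "nat \<Rightarrow> bool list \<Rightarrow> nat" where
  "trailing_run c [] = c"
| "trailing_run c (b # bs) = (if b then trailing_run (Suc c) bs else trailing_run 0 bs)"

fun leading_run :: "bool list \<Rightarrow> nat" where
  "leading_run [] = 0"
| "leading_run (b # bs) = (if b then Suc (leading_run bs) else 0)"

lemma run_sum_append:
  "run_sum g c (xs @ ys) + g (trailing_run c xs) = run_sum g c xs + run_sum g (trailing_run c xs) ys"
  by (induction xs arbitrary: c) auto

lemma run_sum_replicate_True: "run_sum g c (replicate l True @ bs) = run_sum g (c + l) bs"
  by (induction l arbitrary: c) auto

lemma run_sum_replicate_False: "g 0 = 0 \<Longrightarrow> run_sum g 0 (replicate l False @ bs) = run_sum g 0 bs"
  by (induction l) auto

lemma run_sum_id: "run_sum id c bs = c + count_list bs True"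
  by (induction bs arbitrary: c) auto

lemma trailing_run_last_False: "xs \<noteq> [] \<Longrightarrow> last xs = False \<Longrightarrow> trailing_run c xs = 0"
  by (induction xs arbitrary: c) (auto split: if_splits)

lemma leading_run_decomp:
  "\<exists>rest. bs = replicate (leading_run bs) True @ rest \<and> (rest = [] \<or> hd rest = False)"
  by (induction bs) auto

lemma run_sum_block_end:
  "g 0 = 0 \<Longrightarrow> bs = [] \<or> hd bs = False \<Longrightarrow> run_sum g c bs = g c + run_sum g 0 (tl bs)"
  by (cases bs) auto

lemma run_sum_leading:
  assumes "g 0 = 0"
  obtains R where "\<And>c. run_sum g c bs = g (c + leading_run bs) + R"
proof -
  obtain rest where rest: "bs = replicate (leading_run bs) True @ rest" "rest = [] \<or> hd rest = False"
    using leading_run_decomp by blast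
  have "run_sum g c bs = g (c + leading_run bs) + run_sum g 0 (tl rest)" for c
    by (subst rest(1)) (simp add: run_sum_replicate_True run_sum_block_end[of g, OF assms rest(2)])
  then show ?thesis
    by (rule that)
qed

text \<open>The contribution of the blocks meeting two adjacent entries \<open>b1 b2\<close> that are preceded by \<open>t\<close>
  and followed by \<open>s\<close> entries \<open>True\<close>.\<close>

definition pair_runs :: "(nat \<Rightarrow> nat) \<Rightarrow> nat \<Rightarrow> nat \<Rightarrow> bool \<Rightarrow> bool \<Rightarrow> nat" where
  "pair_runs g t s b1 b2 =
    (if b1 \<and> b2 then g (t + s + 2)
     else if b1 then g (Suc t) + g s
     else if b2 then g t + g (Suc s)
     else g t + g s)"

lemma run_sum_clear_pair:
  assumes "g 0 = 0"
  shows "run_sum g 0 (xs @ [b1, b2] @ zs) + pair_runs g (trailing_run 0 xs) (leading_run zs) False False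
       = run_sum g 0 (xs @ [False, False] @ zs) + pair_runs g (trailing_run 0 xs) (leading_run zs) b1 b2"
proof -
  define t where "t = trailing_run 0 xs"
  obtain R where R: "\<And>c. run_sum g c zs = g (c + leading_run zs) + R"
    using run_sum_leading[of g, OF assms] by blast
  have local: "run_sum g t ([b1, b2] @ zs) = pair_runs g t (leading_run zs) b1 b2 + R" for b1 b2
    by (simp add: R assms pair_runs_def)
  have split: "run_sum g 0 (xs @ [b1, b2] @ zs) + g t = run_sum g 0 xs + run_sum g t ([b1, b2] @ zs)"
    for b1 b2
    unfolding t_def by (rule run_sum_append)
  have cancel: "a + q = c + p" if "a + u = X + (p + R)" "c + u = X + (q + R)" for a c u X p q :: nat
    using that by linarith
  show ?thesis
    using cancel[OF split[of b1 b2, unfolded local] split[of False False, unfolded local]]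
    unfolding t_def .
qed

lemma run_sum_isolated_block:
  assumes "g 0 = 0" "xs \<noteq> []" "last xs = False" "zs \<noteq> []" "hd zs = False"
  shows "run_sum g 0 (xs @ replicate c False @ replicate l True @ zs)
       = run_sum g 0 xs + g l + run_sum g 0 (tl zs)"
proof -
  have "run_sum g 0 (xs @ ys) = run_sum g 0 xs + run_sum g 0 ys" for ys
    using run_sum_append[of g 0 xs ys] trailing_run_last_False[OF assms(2,3)] assms(1) by simp
  moreover have "run_sum g 0 (replicate l True @ zs) = g l + run_sum g 0 (tl zs)"
    using run_sum_replicate_True[of g 0 l zs] run_sum_block_end[of g zs l] assms by simp
  ultimately show ?thesis
    by (simp add: run_sum_replicate_False[of g, OF assms(1)])
qed

lemma exists_block:
  assumes "run_sum g c bs \<noteq> 0" and "g 0 = 0"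
  shows "\<exists>xs l zs. replicate c True @ bs = xs @ replicate l True @ zs
    \<and> (xs = [] \<or> last xs = False) \<and> (zs = [] \<or> hd zs = False) \<and> g l \<noteq> 0"
  using assms(1)
proof (induction bs arbitrary: c)
  case Nil
  then show ?case
    by (intro exI[of _ "[]"] exI[of _ c]) auto
next
  case (Cons b bs)
  show ?case
  proof (cases b)
    case True
    have "replicate c True @ b # bs = replicate (Suc c) True @ bs"
      using True by (simp add: replicate_app_Cons_same)
    moreover have "\<exists>xs l zs. replicate (Suc c) True @ bs = xs @ replicate l True @ zs
      \<and> (xs = [] \<or> last xs = False) \<and> (zs = [] \<or> hd zs = False) \<and> g l \<noteq> 0"
      using Cons.IH[of "Suc c"] Cons.prems True by simp
    ultimately show ?thesis
      by (simp only:)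
  next
    case False
    show ?thesis
    proof (cases "g c = 0")
      case False
      then show ?thesis
        using \<open>\<not> b\<close> by (intro exI[of _ "[]"] exI[of _ c] exI[of _ "b # bs"]) auto
    next
      case True
      then have "run_sum g 0 bs \<noteq> 0"
        using Cons.prems \<open>\<not> b\<close> by simp
      then obtain xs l zs where block:
        "bs = xs @ replicate l True @ zs" "xs = [] \<or> last xs = False"
        "zs = [] \<or> hd zs = False" "g l \<noteq> 0"
        using Cons.IH[of 0] by auto
      have "last (replicate c True @ b # xs) = False"
        using block(2) \<open>\<not> b\<close> by (cases xs) simp_all
      then show ?thesis
        using block by (intro exI[of _ "replicate c True @ b # xs"] exI[of _ l] exI[of _ zs]) simp
    qed
  qed
qed

lemma exists_inner_block:
  assumes "run_sum g 0 bs \<noteq> 0" "g 0 = 0" "bs \<noteq> []" "\<not> hd bs" "\<not> last bs"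
  shows "\<exists>xs l zs. bs = xs @ replicate l True @ zs \<and> xs \<noteq> [] \<and> last xs = False
    \<and> zs \<noteq> [] \<and> hd zs = False \<and> g l \<noteq> 0 \<and> 1 \<le> l"
proof -
  obtain xs l zs where block: "bs = xs @ replicate l True @ zs" "xs = [] \<or> last xs = False"
      "zs = [] \<or> hd zs = False" "g l \<noteq> 0"
    using exists_block[of g 0 bs] assms(1,2) by auto
  have "1 \<le> l"
    using block(4) assms(2) by (cases l) auto
  moreover have "xs \<noteq> []"
    using block(1) \<open>1 \<le> l\<close> assms(4) by (cases l) auto
  moreover have "zs \<noteq> []"
    using block(1) \<open>1 \<le> l\<close> assms(5) by auto
  ultimately show ?thesis
    using block by blast
qed

section \<open>Block weights\<close>

definition weight :: "nat \<Rightarrow> nat" where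
  "weight l = 4 * l + (if l mod 3 = 1 then 2 else if l mod 3 = 2 then 1 else 0)"

definition two_mod3 :: "nat \<Rightarrow> nat" where
  "two_mod3 l = (if l mod 3 = 2 then 1 else 0)"

definition weight_sum :: "bool list \<Rightarrow> nat" where
  "weight_sum bs = run_sum weight 0 bs"

definition parity_two_mod3 :: "bool list \<Rightarrow> nat" where
  "parity_two_mod3 bs = run_sum two_mod3 0 bs mod 2"

lemma weight_0 [simp]: "weight 0 = 0" and two_mod3_0 [simp]: "two_mod3 0 = 0"
  by (simp_all add: weight_def two_mod3_def)

lemma three_two_mod3_le_weight: "3 * run_sum two_mod3 c bs \<le> run_sum weight c bs"
proof (induction bs arbitrary: c)
  case Nil
  then show ?case
    unfolding weight_def two_mod3_def by simp presburger
next
  case (Cons b bs)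
  have "3 * two_mod3 c \<le> weight c"
    unfolding weight_def two_mod3_def by presburger
  then show ?case
    using Cons.IH[of 0] Cons.IH[of "Suc c"] by auto
qed

lemma parity_le_weight_sum: "3 * parity_two_mod3 bs \<le> weight_sum bs"
  using three_two_mod3_le_weight[of 0 bs] unfolding parity_two_mod3_def weight_sum_def by linarith

lemma mod_2_add_eq_1_of_odd:
  fixes a c p q :: nat
  assumes "a + q = c + p" and "odd (p + q)"
  shows "a mod 2 + c mod 2 = 1"
  using assms by presburger

lemma two_mod3_01: "two_mod3 l = 0 \<or> two_mod3 l = 1"
  by (simp add: two_mod3_def)

lemma weight_Suc:
  "weight t + 6 \<le> weight (Suc t) \<or> weight t + 3 \<le> weight (Suc t) \<and> odd (two_mod3 (Suc t) + two_mod3 t)"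
  unfolding weight_def two_mod3_def by presburger

lemma weight_merge:
  "weight t + weight s + 6 \<le> weight (t + s + 2)
    \<or> weight t + weight s + 3 \<le> weight (t + s + 2) \<and> odd (two_mod3 (t + s + 2) + two_mod3 t + two_mod3 s)"
proof -
  have "t mod 3 = 0 \<or> t mod 3 = 1 \<or> t mod 3 = 2" "s mod 3 = 0 \<or> s mod 3 = 1 \<or> s mod 3 = 2"
    by auto
  then show ?thesis
    unfolding weight_def two_mod3_def by (elim disjE; simp add: mod_add_eq[symmetric]; presburger)
qed

lemma weight_pair_runs:
  assumes "b1 \<or> b2"
  shows "pair_runs weight t s False False + 6 \<le> pair_runs weight t s b1 b2
    \<or> pair_runs weight t s False False + 3 \<le> pair_runs weight t s b1 b2
      \<and> odd (pair_runs two_mod3 t s b1 b2 + pair_runs two_mod3 t s False False)"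
  using assms weight_Suc[of t] weight_Suc[of s] weight_merge[of t s]
  unfolding pair_runs_def by (auto simp: add.assoc)

lemma weight_sum_clear_pair:
  assumes "b1 \<or> b2"
  shows "6 + weight_sum (xs @ [False, False] @ zs)
    \<le> weight_sum (xs @ [b1, b2] @ zs) + 3 * parity_two_mod3 (xs @ [b1, b2] @ zs)
      + 3 * parity_two_mod3 (xs @ [False, False] @ zs)"
proof -
  let ?w = "pair_runs weight (trailing_run 0 xs) (leading_run zs)"
  let ?p = "pair_runs two_mod3 (trailing_run 0 xs) (leading_run zs)"
  have W: "weight_sum (xs @ [b1, b2] @ zs) + ?w False False = weight_sum (xs @ [False, False] @ zs) + ?w b1 b2"
    unfolding weight_sum_def by (rule run_sum_clear_pair) simp
  have P: "run_sum two_mod3 0 (xs @ [b1, b2] @ zs) + ?p False False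
      = run_sum two_mod3 0 (xs @ [False, False] @ zs) + ?p b1 b2"
    by (rule run_sum_clear_pair) simp
  have "odd (?p b1 b2 + ?p False False) \<Longrightarrow>
      parity_two_mod3 (xs @ [b1, b2] @ zs) + parity_two_mod3 (xs @ [False, False] @ zs) = 1"
    using mod_2_add_eq_1_of_odd[OF P] unfolding parity_two_mod3_def .
  then show ?thesis
    using weight_pair_runs[OF assms, of "trailing_run 0 xs" "leading_run zs"] W by linarith
qed

lemma weight_shrink_block:
  assumes "1 \<le> l"
  shows "two_mod3 (l - min l 2) = two_mod3 l \<and> l mod 3 \<noteq> 2 \<and> weight (l - min l 2) + 6 \<le> weight l
    \<or> two_mod3 (l - min l 2) \<noteq> two_mod3 l \<and> weight (l - min l 2) + 9 \<le> weight l"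
proof (cases "l = 1")
  case False
  define k where "k = l - 2"
  have l: "l = k + 2"
    using assms False by (simp add: k_def)
  have "k mod 3 = 0 \<or> k mod 3 = 1 \<or> k mod 3 = 2"
    by auto
  then show ?thesis
    unfolding l weight_def two_mod3_def by (elim disjE; simp add: mod_add_eq[symmetric]; presburger)
qed (simp add: weight_def two_mod3_def)

lemma weight_sum_shrink_block:
  assumes "xs \<noteq> []" "last xs = False" "zs \<noteq> []" "hd zs = False" "1 \<le> l"
    and "odd (parity_two_mod3 (xs @ replicate l True @ zs)) \<Longrightarrow> l mod 3 = 2"
  defines "bs \<equiv> xs @ replicate l True @ zs"
    and "bs' \<equiv> xs @ replicate (min l 2) False @ replicate (l - min l 2) True @ zs"
  shows "6 + weight_sum bs' + 3 * parity_two_mod3 bs' + 3 * parity_two_mod3 bs \<le> weight_sum bs"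
proof -
  have split: "run_sum g 0 (xs @ replicate c False @ replicate k True @ zs)
      = run_sum g 0 xs + g k + run_sum g 0 (tl zs)" if "g 0 = 0" for g c k
    using run_sum_isolated_block[of g, OF that assms(1-4)] .
  have S: "run_sum g 0 bs = run_sum g 0 xs + g l + run_sum g 0 (tl zs)"
    and S': "run_sum g 0 bs' = run_sum g 0 xs + g (l - min l 2) + run_sum g 0 (tl zs)"
    if "g 0 = 0" for g
    using split[of g 0 l, OF that] split[of g, OF that] by (simp_all add: bs_def bs'_def)
  have W: "weight_sum bs + weight (l - min l 2) = weight_sum bs' + weight l"
    using S[of weight] S'[of weight] by (simp add: weight_sum_def)
  have P: "run_sum two_mod3 0 bs + two_mod3 (l - min l 2) = run_sum two_mod3 0 bs' + two_mod3 l"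
    using S[of two_mod3] S'[of two_mod3] by simp
  from weight_shrink_block[OF assms(5)] show ?thesis
  proof
    assume "two_mod3 (l - min l 2) = two_mod3 l \<and> l mod 3 \<noteq> 2 \<and> weight (l - min l 2) + 6 \<le> weight l"
    moreover from this have "parity_two_mod3 bs = 0" "parity_two_mod3 bs' = 0"
      using assms(6) P unfolding bs_def parity_two_mod3_def by (auto simp flip: even_iff_mod_2_eq_zero)
    ultimately show ?thesis
      using W by linarith
  next
    assume "two_mod3 (l - min l 2) \<noteq> two_mod3 l \<and> weight (l - min l 2) + 9 \<le> weight l"
    moreover from this have "odd (two_mod3 l + two_mod3 (l - min l 2))"
      using two_mod3_01[of l] two_mod3_01[of "l - min l 2"] by auto
    then have "parity_two_mod3 bs + parity_two_mod3 bs' = 1"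
      using mod_2_add_eq_1_of_odd[OF P] unfolding parity_two_mod3_def by simp
    ultimately show ?thesis
      using W by linarith
  qed
qed

lemma weight_three_blocks:
  assumes "j + j' + 1 = m" and "m mod 3 = 2"
  shows "weight j + weight j' + weight m = 4 * (j + j' + m) + 3"
    and "odd (two_mod3 j + two_mod3 j' + two_mod3 m)"
proof -
  have "j mod 3 = 0 \<and> j' mod 3 = 1 \<or> j mod 3 = 1 \<and> j' mod 3 = 0 \<or> j mod 3 = 2 \<and> j' mod 3 = 2"
    using assms by presburger
  then show "weight j + weight j' + weight m = 4 * (j + j' + m) + 3"
    and "odd (two_mod3 j + two_mod3 j' + two_mod3 m)"
    using assms(2) by (auto simp: weight_def two_mod3_def)
qed

section \<open>The path as a pair-clearing game\<close>

definition path_adj :: "nat \<Rightarrow> nat \<Rightarrow> bool" where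
  "path_adj i j \<longleftrightarrow> Suc i = j \<or> Suc j = i"

abbreviation path_play :: "nat \<Rightarrow> nat set \<Rightarrow> nat \<Rightarrow> nat set" where
  "path_play m D x \<equiv> D \<union> nbhd path_adj {..<2 * m} x"

text \<open>Entries \<open>1..m\<close> of \<open>undominated_list m D\<close> record the even vertices \<open>0, 2, ..., 2m - 2\<close>, entries
  \<open>m + 3..2m + 2\<close> the odd vertices \<open>1, 3, ..., 2m - 1\<close>; the four remaining entries are \<open>False\<close>
  padding.  Playing \<open>x\<close> clears exactly the entries \<open>move_pos m x\<close> and \<open>move_pos m x + 1\<close>.\<close>

definition undominated_flag :: "nat \<Rightarrow> nat set \<Rightarrow> nat \<Rightarrow> bool" where
  "undominated_flag m D i =
    (if 1 \<le> i \<and> i \<le> m then 2 * (i - 1) \<notin> D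
     else if m + 3 \<le> i \<and> i \<le> 2 * m + 2 then 2 * (i - m - 3) + 1 \<notin> D
     else False)"

definition undominated_list :: "nat \<Rightarrow> nat set \<Rightarrow> bool list" where
  "undominated_list m D = map (undominated_flag m D) [0..<2 * m + 4]"

definition move_pos :: "nat \<Rightarrow> nat \<Rightarrow> nat" where
  "move_pos m x = (if odd x then (x + 1) div 2 else m + 2 + x div 2)"

definition move_range :: "nat \<Rightarrow> nat \<Rightarrow> bool" where
  "move_range m k \<longleftrightarrow> 1 \<le> k \<and> k \<le> m \<or> m + 2 \<le> k \<and> k \<le> 2 * m + 1"

lemma nbhd_path: "nbhd path_adj {..<2 * m} x = {y. y < 2 * m \<and> (Suc x = y \<or> Suc y = x)}"
  by (auto simp: nbhd_def path_adj_def)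

lemma length_undominated_list [simp]: "length (undominated_list m D) = 2 * m + 4"
  by (simp add: undominated_list_def)

lemma nth_undominated_list: "i < 2 * m + 4 \<Longrightarrow> undominated_list m D ! i = undominated_flag m D i"
  by (simp add: undominated_list_def)

lemma undominated_list_True:
  "i < 2 * m + 4 \<Longrightarrow> undominated_list m D ! i \<Longrightarrow> 1 \<le> i \<and> i \<le> m \<or> m + 3 \<le> i \<and> i \<le> 2 * m + 2"
  by (auto simp: nth_undominated_list undominated_flag_def split: if_splits)

lemma undominated_list_padding:
  "\<not> undominated_list m D ! 0" "\<not> undominated_list m D ! (m + 1)"
  "\<not> undominated_list m D ! (m + 2)" "\<not> undominated_list m D ! (2 * m + 3)"
  by (simp_all add: nth_undominated_list undominated_flag_def)

lemma move_pos_bound: "x < 2 * m \<Longrightarrow> Suc (move_pos m x) < 2 * m + 4"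
  by (auto simp: move_pos_def)

lemma move_pos_surj: "move_range m k \<Longrightarrow> \<exists>x<2 * m. move_pos m x = k"
proof (unfold move_range_def, elim disjE)
  assume "1 \<le> k \<and> k \<le> m"
  then show ?thesis
    by (intro exI[of _ "2 * k - 1"]) (auto simp: move_pos_def)
next
  assume "m + 2 \<le> k \<and> k \<le> 2 * m + 1"
  then show ?thesis
    by (intro exI[of _ "2 * (k - m - 2)"]) (auto simp: move_pos_def)
qed

lemma undominated_flag_play:
  assumes "x < 2 * m"
  shows "undominated_flag m (path_play m D x) i
    \<longleftrightarrow> i \<noteq> move_pos m x \<and> i \<noteq> Suc (move_pos m x) \<and> undominated_flag m D i"
proof (cases "odd x")
  case True
  then obtain j where "x = 2 * j + 1"
    by (metis oddE)
  then show ?thesis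
    using assms unfolding nbhd_path undominated_flag_def move_pos_def by auto presburger+
next
  case False
  then obtain j where "x = 2 * j"
    by (metis evenE)
  then show ?thesis
    using assms unfolding nbhd_path undominated_flag_def move_pos_def by auto presburger+
qed

lemma undominated_list_play:
  assumes "x < 2 * m"
  shows "undominated_list m (path_play m D x)
    = (undominated_list m D)[move_pos m x := False, Suc (move_pos m x) := False]"
  using assms move_pos_bound[OF assms]
  by (intro nth_equalityI) (simp_all add: nth_undominated_list undominated_flag_play nth_list_update)

lemma legal_moves_path:
  "x \<in> legal_moves path_adj {..<2 * m} D \<longleftrightarrow>
    x < 2 * m \<and> (undominated_list m D ! move_pos m x \<or> undominated_list m D ! Suc (move_pos m x))"
proof (cases "x < 2 * m")
  case True
  have "(\<exists>y. y < 2 * m \<and> (Suc x = y \<or> Suc y = x) \<and> y \<notin> D)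
      \<longleftrightarrow> Suc x < 2 * m \<and> Suc x \<notin> D \<or> 1 \<le> x \<and> x - 1 \<notin> D"
    using True by (cases x) (fastforce dest: Suc_lessD)+
  also have "\<dots> \<longleftrightarrow> undominated_flag m D (move_pos m x) \<or> undominated_flag m D (Suc (move_pos m x))"
  proof (cases "odd x")
    case True
    then obtain j where "x = 2 * j + 1"
      by (metis oddE)
    then show ?thesis
      using \<open>x < 2 * m\<close> unfolding undominated_flag_def move_pos_def by auto
  next
    case False
    then obtain j where "x = 2 * j"
      by (metis evenE)
    moreover from this have "Suc x < 2 * m"
      using \<open>x < 2 * m\<close> by presburger
    ultimately show ?thesis
      using \<open>x < 2 * m\<close> unfolding undominated_flag_def move_pos_def by (cases j) auto
  qed
  finally show ?thesis
    using True move_pos_bound[OF True] by (auto simp: legal_moves_def nbhd_path nth_undominated_list)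
qed (simp add: legal_moves_def)

lemma legal_path_move_clears_pair:
  assumes "x \<in> legal_moves path_adj {..<2 * m} D"
  obtains xs b1 b2 zs where "undominated_list m D = xs @ [b1, b2] @ zs" "b1 \<or> b2"
    "undominated_list m (path_play m D x) = xs @ [False, False] @ zs"
proof -
  let ?Q = "undominated_list m D" and ?k = "move_pos m x"
  have x: "x < 2 * m" "?Q ! ?k \<or> ?Q ! Suc ?k"
    using assms legal_moves_path by blast+
  have "Suc ?k < length ?Q"
    using move_pos_bound[OF x(1)] by simp
  then show ?thesis
    using that[of "take ?k ?Q" "?Q ! ?k" "?Q ! Suc ?k" "drop (Suc (Suc ?k)) ?Q"]
      clear_pair_decomp x undominated_list_play[OF x(1)] by auto
qed

lemma legal_path_move_of_pair:
  assumes "move_range m k" and "undominated_list m D ! k \<or> undominated_list m D ! Suc k"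
  shows "\<exists>x\<in>legal_moves path_adj {..<2 * m} D.
    undominated_list m (path_play m D x) = (undominated_list m D)[k := False, Suc k := False]"
proof -
  obtain x where "x < 2 * m" "move_pos m x = k"
    using move_pos_surj[OF assms(1)] by blast
  then show ?thesis
    using assms(2) legal_moves_path undominated_list_play by blast
qed

lemma undominated_list_blocks:
  "undominated_list m D =
    False # map (\<lambda>j. 2 * j \<notin> D) [0..<m] @ [False, False] @ map (\<lambda>j. 2 * j + 1 \<notin> D) [0..<m] @ [False]"
  by (rule nth_equalityI) (auto simp: nth_undominated_list undominated_flag_def nth_Cons' nth_append numeral_3_eq_3)

lemma undominated_list_empty:
  "undominated_list m {} = False # replicate m True @ [False, False] @ replicate m True @ [False]"
  by (simp add: undominated_list_blocks map_replicate_const)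

lemma undominated_list_singleton:
  assumes "v < 2 * m"
  obtains j j' where "j + j' + 1 = m"
    and "\<And>g. g 0 = 0 \<Longrightarrow> run_sum g 0 (undominated_list m {v}) = g j + g j' + g m"
proof (cases "even v")
  case True
  then obtain j where v: "v = 2 * j"
    by blast
  with assms have "j < m"
    by simp
  have "Suc (2 * i) \<noteq> 2 * j" for i
    by presburger
  with \<open>j < m\<close> have "undominated_list m {v} = False # (replicate j True @ False # replicate (m - Suc j) True)
      @ [False, False] @ replicate m True @ [False]"
    by (simp add: undominated_list_blocks v map_neq_upt[symmetric] map_replicate_const cong: map_cong)
  then show ?thesis
    using \<open>j < m\<close> by (intro that[of j "m - Suc j"]) (simp_all add: run_sum_replicate_True)
next
  case False
  then obtain j where v: "v = 2 * j + 1"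
    using oddE by blast
  with assms have "j < m"
    by simp
  have "2 * i \<noteq> Suc (2 * j)" for i
    by presburger
  with \<open>j < m\<close> have "undominated_list m {v} = False # replicate m True @ [False, False]
      @ (replicate j True @ False # replicate (m - Suc j) True) @ [False]"
    by (simp add: undominated_list_blocks v map_neq_upt[symmetric] map_replicate_const cong: map_cong)
  then show ?thesis
    using \<open>j < m\<close> by (intro that[of j "m - Suc j"]) (simp_all add: run_sum_replicate_True)
qed

section \<open>Bounds for the game on the path\<close>

lemma weight_sum_path_move:
  assumes "x \<in> legal_moves path_adj {..<2 * m} D"
  defines "Q \<equiv> undominated_list m D" and "Q' \<equiv> undominated_list m (path_play m D x)"
  shows "6 + weight_sum Q' \<le> weight_sum Q + 3 * parity_two_mod3 Q + 3 * parity_two_mod3 Q'"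
  using assms(1)
proof (rule legal_path_move_clears_pair)
  fix xs b1 b2 zs
  assume "undominated_list m D = xs @ [b1, b2] @ zs" "b1 \<or> b2"
    "undominated_list m (path_play m D x) = xs @ [False, False] @ zs"
  then show ?thesis
    using weight_sum_clear_pair[of b1 b2 xs zs] by (simp add: Q_def Q'_def)
qed

lemma count_path_move:
  assumes "x \<in> legal_moves path_adj {..<2 * m} D"
  defines "u \<equiv> count_list (undominated_list m D) True"
    and "u' \<equiv> count_list (undominated_list m (path_play m D x)) True"
  shows "u' < u \<and> u \<le> u' + 2"
  using assms(1)
proof (rule legal_path_move_clears_pair)
  fix xs b1 b2 zs
  assume "undominated_list m D = xs @ [b1, b2] @ zs" "b1 \<or> b2"
    "undominated_list m (path_play m D x) = xs @ [False, False] @ zs"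
  then show ?thesis
    by (auto simp: u_def u'_def)
qed

lemma exists_path_move_count_Suc:
  assumes "True \<in> set (undominated_list m D)"
  shows "\<exists>x\<in>legal_moves path_adj {..<2 * m} D.
    count_list (undominated_list m D) True = Suc (count_list (undominated_list m (path_play m D x)) True)"
proof -
  let ?Q = "undominated_list m D"
  obtain i where i: "i < 2 * m + 4" "?Q ! i"
    using assms by (auto simp: in_set_conv_nth)
  have "\<exists>k. move_range m k \<and> ?Q ! k \<noteq> ?Q ! Suc k"
  proof (cases "i \<le> m")
    case True
    then obtain k where "i \<le> k" "k < m + 1" "?Q ! k" "\<not> ?Q ! Suc k"
      using exists_True_False_step[of "(!) ?Q" i "m + 1"] i undominated_list_padding(2) by auto
    moreover have "1 \<le> i"
      using undominated_list_True[OF i] by auto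
    ultimately show ?thesis
      by (intro exI[of _ k]) (auto simp: move_range_def)
  next
    case False
    then have "m + 3 \<le> i" "i \<le> 2 * m + 2"
      using undominated_list_True[OF i] by auto
    then obtain k where "m + 2 \<le> k" "k < i" "\<not> ?Q ! k" "?Q ! Suc k"
      using exists_True_False_step[of "\<lambda>j. \<not> ?Q ! j" "m + 2" i] i undominated_list_padding(3) by auto
    then show ?thesis
      using \<open>i \<le> 2 * m + 2\<close> by (intro exI[of _ k]) (auto simp: move_range_def)
  qed
  then obtain k where k: "move_range m k" "?Q ! k \<noteq> ?Q ! Suc k"
    by blast
  obtain x where x: "x \<in> legal_moves path_adj {..<2 * m} D"
    "undominated_list m (path_play m D x) = ?Q[k := False, Suc k := False]"
    using legal_path_move_of_pair[OF k(1)] k(2) by blast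
  have "Suc k < length ?Q"
    using k(1) by (auto simp: move_range_def)
  then have "count_list ?Q True = Suc (count_list (?Q[k := False, Suc k := False]) True)"
    using count_clear_pair[of k ?Q] k(2) by auto
  then show ?thesis
    by (intro bexI[OF _ x(1)]) (simp add: x(2))
qed

lemma undominated_list_True_pair:
  assumes "undominated_list m D = xs @ True # True # ys"
  shows "move_range m (length xs)"
proof -
  have "Suc (length xs) < 2 * m + 4"
    using arg_cong[OF assms, of length] by simp
  moreover have "undominated_list m D ! length xs" "undominated_list m D ! Suc (length xs)"
    using assms by (simp_all add: nth_append)
  ultimately show ?thesis
    using undominated_list_True[of "length xs" m D] undominated_list_True[of "Suc (length xs)" m D]
    by (auto simp: move_range_def)
qed

lemma undominated_list_single_True:
  assumes "undominated_list m D = xs @ [False, True, False] @ ys"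
  obtains k where "move_range m k" "undominated_list m D ! k \<or> undominated_list m D ! Suc k"
    "(undominated_list m D)[k := False, Suc k := False] = xs @ [False, False, False] @ ys"
proof -
  let ?Q = "undominated_list m D" and ?i = "Suc (length xs)"
  have "?i < 2 * m + 4"
    using arg_cong[OF assms, of length] by simp
  moreover have "?Q ! ?i"
    using assms by (simp add: nth_append)
  ultimately consider "1 \<le> ?i" "?i \<le> m" | "m + 3 \<le> ?i" "?i \<le> 2 * m + 2"
    using undominated_list_True by blast
  then show ?thesis
  proof cases
    case 1
    then show ?thesis
      using assms by (intro that[of ?i]) (auto simp: move_range_def list_update_append nth_append)
  next
    case 2
    then show ?thesis
      using assms by (intro that[of "length xs"]) (auto simp: move_range_def list_update_append nth_append)
  qed
qed

lemma path_block_shrink: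
  assumes Q: "undominated_list m D = xs @ replicate l True @ zs"
    and "xs \<noteq> []" "last xs = False" "zs \<noteq> []" "hd zs = False" "1 \<le> l"
  shows "\<exists>x\<in>legal_moves path_adj {..<2 * m} D.
    undominated_list m (path_play m D x) = xs @ replicate (min l 2) False @ replicate (l - min l 2) True @ zs"
proof -
  let ?Q = "undominated_list m D"
  have "\<exists>k. move_range m k \<and> (?Q ! k \<or> ?Q ! Suc k)
      \<and> ?Q[k := False, Suc k := False] = xs @ replicate (min l 2) False @ replicate (l - min l 2) True @ zs"
  proof (cases "2 \<le> l")
    case True
    then obtain l' where "l = Suc (Suc l')"
      by (metis add_2_eq_Suc le_Suc_ex)
    with Q have "?Q = xs @ True # True # replicate l' True @ zs"
      by simp
    then show ?thesis
      using undominated_list_True_pair \<open>l = Suc (Suc l')\<close>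
      by (intro exI[of _ "length xs"]) (simp add: list_update_append nth_append)
  next
    case False
    obtain xs0 zs0 where "xs = xs0 @ [False]" "zs = False # zs0"
      using assms(2-5) by (metis append_butlast_last_id list.collapse)
    moreover have "l = 1"
      using False assms(6) by simp
    ultimately have "?Q = xs0 @ [False, True, False] @ zs0"
      using Q by simp
    then obtain k where "move_range m k" "?Q ! k \<or> ?Q ! Suc k"
      "?Q[k := False, Suc k := False] = xs0 @ [False, False, False] @ zs0"
      by (rule undominated_list_single_True)
    then show ?thesis
      using \<open>xs = xs0 @ [False]\<close> \<open>zs = False # zs0\<close> \<open>l = 1\<close> by (intro exI[of _ k]) simp
  qed
  then obtain k where k: "move_range m k" "?Q ! k \<or> ?Q ! Suc k"
    "?Q[k := False, Suc k := False] = xs @ replicate (min l 2) False @ replicate (l - min l 2) True @ zs"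
    by blast
  obtain x where "x \<in> legal_moves path_adj {..<2 * m} D" "undominated_list m (path_play m D x) = ?Q[k := False, Suc k := False]"
    using legal_path_move_of_pair[OF k(1,2)] by blast
  then show ?thesis
    using k(3) by (intro bexI) simp_all
qed

lemma exists_path_move_weight:
  assumes "True \<in> set (undominated_list m D)"
  defines "Q \<equiv> undominated_list m D"
  shows "\<exists>x\<in>legal_moves path_adj {..<2 * m} D.
    6 + weight_sum (undominated_list m (path_play m D x)) + 3 * parity_two_mod3 (undominated_list m (path_play m D x))
      + 3 * parity_two_mod3 Q \<le> weight_sum Q"
proof -
  define g where "g = (if odd (run_sum two_mod3 0 Q) then two_mod3 else id)"
  have "g 0 = 0"
    by (simp add: g_def)
  moreover have "count_list Q True \<noteq> 0"
    using assms(1) by (simp add: Q_def count_list_0_iff)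
  then have "run_sum g 0 Q \<noteq> 0"
    by (auto simp: g_def run_sum_id odd_pos)
  moreover have "Q \<noteq> []"
    by (simp add: Q_def flip: length_greater_0_conv)
  moreover from this have "\<not> hd Q" "\<not> last Q"
    using undominated_list_padding(1,4)[of m D] by (simp_all add: Q_def hd_conv_nth last_conv_nth add.commute)
  ultimately obtain xs l zs where block: "Q = xs @ replicate l True @ zs" "xs \<noteq> []" "last xs = False"
      "zs \<noteq> []" "hd zs = False" "g l \<noteq> 0" "1 \<le> l"
    using exists_inner_block by blast
  have "odd (parity_two_mod3 Q) \<Longrightarrow> l mod 3 = 2"
    using block(6) by (auto simp: g_def parity_two_mod3_def two_mod3_def split: if_splits)
  then have "6 + weight_sum (xs @ replicate (min l 2) False @ replicate (l - min l 2) True @ zs)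
      + 3 * parity_two_mod3 (xs @ replicate (min l 2) False @ replicate (l - min l 2) True @ zs)
      + 3 * parity_two_mod3 Q \<le> weight_sum Q"
    using weight_sum_shrink_block[OF block(2-5,7)] block(1) by simp
  moreover obtain x where "x \<in> legal_moves path_adj {..<2 * m} D"
    "undominated_list m (path_play m D x) = xs @ replicate (min l 2) False @ replicate (l - min l 2) True @ zs"
    using path_block_shrink block unfolding Q_def by blast
  ultimately show ?thesis
    by (metis (no_types, lifting))
qed

lemma legal_moves_path_nonempty_iff:
  "legal_moves path_adj {..<2 * m} D \<noteq> {} \<longleftrightarrow> True \<in> set (undominated_list m D)"
proof
  assume "legal_moves path_adj {..<2 * m} D \<noteq> {}"
  then obtain x where x: "x < 2 * m"
    "undominated_list m D ! move_pos m x \<or> undominated_list m D ! Suc (move_pos m x)"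
    using legal_moves_path by blast
  then show "True \<in> set (undominated_list m D)"
    using move_pos_bound[OF x(1)] by (metis Suc_lessD length_undominated_list nth_mem)
next
  assume "True \<in> set (undominated_list m D)"
  then show "legal_moves path_adj {..<2 * m} D \<noteq> {}"
    using exists_path_move_count_Suc by blast
qed

lemma path_game_upper_bound:
  fixes m :: nat and D :: "nat set"
  defines "Q \<equiv> undominated_list m D"
  shows "tg_val path_adj {..<2 * m} True D \<le> (weight_sum Q - 3 * parity_two_mod3 Q) div 6"
proof -
  let ?uD = "\<lambda>D. (weight_sum (undominated_list m D) - 3 * parity_two_mod3 (undominated_list m D)) div 6"
  let ?uS = "\<lambda>D. (weight_sum (undominated_list m D) + 3 * parity_two_mod3 (undominated_list m D)) div 6"
  have step: "Suc (a div 6) \<le> b div 6" if "a + 6 \<le> b" for a b :: nat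
    using div_le_mono[OF that, of 6] by simp
  have "tg_val path_adj {..<2 * m} True D \<le> ?uD D \<and> tg_val path_adj {..<2 * m} False D \<le> ?uS D"
  proof (rule tg_val_le_potential)
    fix D
    assume "legal_moves path_adj {..<2 * m} D \<noteq> {}"
    then obtain x where x: "x \<in> legal_moves path_adj {..<2 * m} D"
      "6 + weight_sum (undominated_list m (path_play m D x)) + 3 * parity_two_mod3 (undominated_list m (path_play m D x))
        + 3 * parity_two_mod3 (undominated_list m D) \<le> weight_sum (undominated_list m D)"
      using exists_path_move_weight legal_moves_path_nonempty_iff by blast
    from x(2) have "Suc (?uS (path_play m D x)) \<le> ?uD D"
      by (intro step) linarith
    with x(1) show "\<exists>x\<in>legal_moves path_adj {..<2 * m} D. Suc (?uS (path_play m D x)) \<le> ?uD D" ..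
  next
    fix D x
    assume "x \<in> legal_moves path_adj {..<2 * m} D"
    then show "Suc (?uD (path_play m D x)) \<le> ?uS D"
      using weight_sum_path_move parity_le_weight_sum[of "undominated_list m (path_play m D x)"]
      by (intro step) fastforce
  qed simp
  then show ?thesis
    by (simp add: Q_def)
qed

lemma path_game_lower_bound:
  "(2 * count_list (undominated_list m D) True + 1) div 3 \<le> tg_val path_adj {..<2 * m} True D"
proof -
  let ?u = "\<lambda>D. count_list (undominated_list m D) True"
  have "(2 * ?u D + 1) div 3 \<le> tg_val path_adj {..<2 * m} True D
      \<and> (2 * ?u D + 2) div 3 \<le> tg_val path_adj {..<2 * m} False D"
  proof (rule tg_val_ge_potential)
    fix D x
    assume "x \<in> legal_moves path_adj {..<2 * m} D"
    then have "2 * ?u D + 1 \<le> 2 * ?u (path_play m D x) + 2 + 3"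
      using count_path_move by fastforce
    then show "(2 * ?u D + 1) div 3 \<le> Suc ((2 * ?u (path_play m D x) + 2) div 3)"
      using div_le_mono[of _ _ 3] by fastforce
  next
    fix D
    assume "legal_moves path_adj {..<2 * m} D \<noteq> {}"
    then obtain x where "x \<in> legal_moves path_adj {..<2 * m} D" "?u D = Suc (?u (path_play m D x))"
      using exists_path_move_count_Suc legal_moves_path_nonempty_iff by blast
    then show "\<exists>x\<in>legal_moves path_adj {..<2 * m} D.
        (2 * ?u D + 2) div 3 \<le> Suc ((2 * ?u (path_play m D x) + 1) div 3)"
      by (intro bexI) simp_all
  next
    fix D
    assume "legal_moves path_adj {..<2 * m} D = {}"
    then have "?u D = 0"
      using legal_moves_path_nonempty_iff[of m D] by (simp add: count_list_0_iff)
    then show "(2 * ?u D + 1) div 3 = 0 \<and> (2 * ?u D + 2) div 3 = 0"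
      by simp
  qed simp
  then show ?thesis
    by blast
qed

lemma path_game_empty_lower_bound:
  assumes "m mod 3 = 2"
  shows "4 * m + 1 \<le> 3 * tg_val path_adj {..<2 * m} True {}"
proof -
  have "(4 * m + 1) div 3 \<le> tg_val path_adj {..<2 * m} True {}"
    using path_game_lower_bound[of m "{}"] by (simp add: undominated_list_empty count_list_replicate_same)
  moreover have "3 dvd 4 * m + 1"
    using assms by presburger
  ultimately show ?thesis
    by fastforce
qed

lemma path_game_singleton_upper_bound:
  assumes "m mod 3 = 2" and "w < 2 * m"
  shows "3 * tg_val path_adj {..<2 * m} True {w} \<le> 4 * m - 2"
proof -
  obtain j j' where jj: "j + j' + 1 = m"
    and runs: "\<And>g. g 0 = 0 \<Longrightarrow> run_sum g 0 (undominated_list m {w}) = g j + g j' + g m"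
    using undominated_list_singleton[OF assms(2)] by blast
  have "weight_sum (undominated_list m {w}) = 4 * (2 * m - 1) + 3"
    using runs[of weight] weight_three_blocks(1)[OF jj assms(1)] jj by (simp add: weight_sum_def)
  moreover have "parity_two_mod3 (undominated_list m {w}) = 1"
    using runs[of two_mod3] weight_three_blocks(2)[OF jj assms(1)]
    unfolding parity_two_mod3_def odd_iff_mod_2_eq_one by simp
  moreover have "(8 * m - 4) div 6 * 3 \<le> 4 * m - 2"
    by simp
  ultimately show ?thesis
    using path_game_upper_bound[of m "{w}"] jj by simp
qed

theorem lemma3p6:
  fixes E :: "'a \<Rightarrow> 'a \<Rightarrow> bool" and V :: "'a set" and n :: nat and v :: 'a
  assumes "n \<ge> 4" and "n mod 6 = 4"
    and "iso_path E V n"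
    and "v \<in> V"
  shows "gamma_tg_pre E V v \<le> gamma_tg E V - 1"
proof -
  define m where "m = n div 2"
  have n: "n = 2 * m" and m: "m mod 3 = 2"
    using assms(2) unfolding m_def by presburger+
  obtain f where f: "bij_betw f {..<2 * m} V"
    and adj: "\<And>i j. i \<in> {..<2 * m} \<Longrightarrow> j \<in> {..<2 * m} \<Longrightarrow> E (f i) (f j) \<longleftrightarrow> path_adj i j"
    using assms(3) unfolding iso_path_def n path_adj_def by auto
  have iso: "tg_val E V True (f ` D) = tg_val path_adj {..<2 * m} True D" if "D \<subseteq> {..<2 * m}" for D
    using tg_val_iso[where E = E and E' = path_adj, OF f adj finite_lessThan that] .
  obtain w where w: "w < 2 * m" "v = f w"
    using assms(4) f by (auto simp: bij_betw_def)
  have "3 * gamma_tg_pre E V v \<le> 4 * m - 2"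
    using path_game_singleton_upper_bound[OF m w(1)] iso[of "{w}"] w by (simp add: gamma_tg_pre_def)
  moreover have "4 * m + 1 \<le> 3 * gamma_tg E V"
    using path_game_empty_lower_bound[OF m] iso[of "{}"] by (simp add: gamma_tg_def)
  ultimately show ?thesis
    by linarith
qed

end
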